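(* Let $\varepsilon>0$, $a>0$, $u>0$, $F=(u,0)\in\mathbb{R}^2$, and $\eta_\varepsilon(x)=(4\pi\varepsilon)^{-1}\exp(-|x|^2/(4\varepsilon))$ for $x\in\mathbb{R}^2$. Let $(X_\varepsilon,c_\varepsilon)$, $X_\varepsilon=(X_\varepsilon^{(1)},X_\varepsilon^{(2)})$, be the solution of $$\partial_t X_\varepsilon=\nabla c_\varepsilon(X_\varepsilon(t),t)+F,\qquad \partial_t c_\varepsilon-\Delta c_\varepsilon=a\,\eta_\varepsilon(x-X_\varepsilon(t))\quad\text{in }\mathbb{R}^2,\ t>0,$$ with $X_\varepsilon(0)=(x^0,y^0)\in\mathbb{R}^2$ and $c_\varepsilon(0)=0$. Assume (i) $t\mapsto\partial_tX_\varepsilon^{(1)}(t)$ is nonincreasing for all sufficiently large $t>0$; (ii) there exists $v_\varepsilon>0$ such that $\partial_t X_\varepsilon(t)\to(v_\varepsilon,0)$ as $t\to\infty$; (iii) $v_\varepsilon$ is bounded for all $\varepsilon\in(0,1)$. Then $v_\varepsilon\to0$ as $\varepsilon\to0$.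
   Context: $c_\varepsilon$ is the Duhamel (heat-kernel) solution of the heat equation with the given source; the assumptions are made for each $\varepsilon\in(0,1)$. *)

theory Defs
  imports "HOL-Analysis.Analysis"
begin

definition heat_kernel :: "real \<times> real \<Rightarrow> real \<Rightarrow> real" where
  "heat_kernel x t = exp (- ((norm x)^2) / (4 * t)) / (4 * pi * t)"

definition eta :: "real \<Rightarrow> real \<times> real \<Rightarrow> real" where
  "eta \<epsilon> x = exp (- ((norm x)^2) / (4 * \<epsilon>)) / (4 * pi * \<epsilon>)"

text \<open>Duhamel solution of  c_t - Laplace c = a eta_eps(x - X(t)),  c(0) = 0.\<close>
definition duhamel_c :: "real \<Rightarrow> real \<Rightarrow> (real \<Rightarrow> real \<times> real) \<Rightarrow> real \<times> real \<Rightarrow> real \<Rightarrow> real" where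
  "duhamel_c a \<epsilon> X x t =
     (LINT s:{0..t}|lborel. (LINT y|lborel. heat_kernel (x - y) (t - s) * (a * eta \<epsilon> (y - X s))))"

end

theory Submission
  imports Defs "HOL-Probability.Probability" "HOL-Real_Asymp.Real_Asymp"
begin

(*
  For large s the displacement X(t) - X(s) is close to (t - s) (v, 0), so the chemical laid down
  in the recent past lies behind the particle and the gradient of c at X(t) points backwards.
  Comparing shifted heat kernels through exp A >= 1 + A, the first component of that gradient is
  at most an o(1) contribution of the distant past minus a v exp(-(M + 2)^2/4) ln(1/eps) / (64 pi)
  from the window t - 1 <= s <= t - eps: there the kernel's time argument eps + t - s turns the
  singularity 1/(t - s) into ln(1/eps). Letting t -> oo in X_1' = u + d_1 c gives
  v (1 + k ln(1/eps)) <= u with k independent of eps because v is bounded by M, hence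
  v_eps <= u / (1 + k ln(1/eps)) -> 0.
*)

definition heat_kernel_1d :: "real \<Rightarrow> real \<Rightarrow> real" where
  "heat_kernel_1d \<sigma> z = normal_density 0 (sqrt (2 * \<sigma>)) z"

lemma heat_kernel_1d_nonneg [simp]: "0 \<le> heat_kernel_1d \<sigma> z"
  by (simp add: heat_kernel_1d_def)

lemma heat_kernel_1d_borel [measurable]: "heat_kernel_1d \<sigma> \<in> borel_measurable borel"
  unfolding heat_kernel_1d_def[abs_def] by simp

lemma heat_kernel_1d_eq:
  "0 < \<sigma> \<Longrightarrow> heat_kernel_1d \<sigma> z = exp (- (z ^ 2) / (4 * \<sigma>)) / sqrt (4 * pi * \<sigma>)"
  by (simp add: heat_kernel_1d_def normal_density_def field_simps)

lemma heat_kernel_eq_1d_product: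
  assumes "0 < \<sigma>"
  shows "heat_kernel w \<sigma> = heat_kernel_1d \<sigma> (fst w) * heat_kernel_1d \<sigma> (snd w)"
proof -
  have "sqrt (4 * pi * \<sigma>) * sqrt (4 * pi * \<sigma>) = 4 * pi * \<sigma>"
    using assms by simp
  moreover have "(norm w)\<^sup>2 = (fst w)\<^sup>2 + (snd w)\<^sup>2"
    by (cases w) (simp add: norm_Pair)
  ultimately show ?thesis
    using assms by (simp add: heat_kernel_def heat_kernel_1d_eq field_simps flip: exp_add)
qed

lemma eta_eq_heat_kernel: "eta \<epsilon> x = heat_kernel x \<epsilon>"
  by (simp add: eta_def heat_kernel_def)

lemma heat_kernel_1d_convolution:
  assumes "0 < \<sigma>" "0 < \<tau>"
  shows "(\<integral>\<^sup>+y. ennreal (heat_kernel_1d \<sigma> (x - y) * heat_kernel_1d \<tau> (y - p)) \<partial>lborel)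
    = ennreal (heat_kernel_1d (\<sigma> + \<tau>) (x - p))"
proof -
  have "(\<integral>\<^sup>+y. ennreal (heat_kernel_1d \<sigma> (x - y) * heat_kernel_1d \<tau> (y - p)) \<partial>lborel)
      = (\<integral>\<^sup>+y. ennreal (normal_density 0 (sqrt (2 * \<sigma>)) ((x - p) - y)
                        * normal_density 0 (sqrt (2 * \<tau>)) y) \<partial>lborel)"
    using nn_integral_real_affine[of "\<lambda>y. ennreal (heat_kernel_1d \<sigma> (x - y) * heat_kernel_1d \<tau> (y - p))" 1 p]
    by (simp add: heat_kernel_1d_def algebra_simps)
  also have "\<dots> = ennreal (normal_density 0 (sqrt ((sqrt (2 * \<sigma>))\<^sup>2 + (sqrt (2 * \<tau>))\<^sup>2)) (x - p))"
    using conv_normal_density_zero_mean[of "sqrt (2 * \<sigma>)" "sqrt (2 * \<tau>)"] assms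
    by (auto dest: fun_cong)
  also have "\<dots> = ennreal (heat_kernel_1d (\<sigma> + \<tau>) (x - p))"
    using assms by (simp add: heat_kernel_1d_def algebra_simps)
  finally show ?thesis .
qed

lemma nn_integral_lborel_pair_product:
  fixes f g :: "real \<Rightarrow> real"
  assumes [measurable]: "f \<in> borel_measurable borel" "g \<in> borel_measurable borel"
    and "\<And>y. 0 \<le> f y" "\<And>y. 0 \<le> g y"
  shows "(\<integral>\<^sup>+y. ennreal (f (fst y) * g (snd y)) \<partial>(lborel :: (real \<times> real) measure))
     = (\<integral>\<^sup>+y. ennreal (f y) \<partial>lborel) * (\<integral>\<^sup>+y. ennreal (g y) \<partial>lborel)"
proof -
  have "(\<integral>\<^sup>+y. ennreal (f (fst y) * g (snd y)) \<partial>(lborel :: (real \<times> real) measure))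
      = (\<integral>\<^sup>+y. ennreal (f (fst y)) * ennreal (g (snd y)) \<partial>(lborel \<Otimes>\<^sub>M lborel))"
    using assms(3,4) by (simp add: lborel_prod ennreal_mult)
  also have "\<dots> = (\<integral>\<^sup>+y\<^sub>1. \<integral>\<^sup>+y\<^sub>2. ennreal (f y\<^sub>1) * ennreal (g y\<^sub>2) \<partial>lborel \<partial>lborel)"
    by (subst lborel.nn_integral_fst[symmetric]) auto
  also have "\<dots> = (\<integral>\<^sup>+y. ennreal (f y) \<partial>lborel) * (\<integral>\<^sup>+y. ennreal (g y) \<partial>lborel)"
    by (simp add: nn_integral_cmult nn_integral_multc)
  finally show ?thesis .
qed

lemma heat_kernel_convolution:
  assumes "0 < \<sigma>" "0 < \<tau>"
  shows "(LINT y|lborel. heat_kernel (x - y) \<sigma> * heat_kernel (y - p) \<tau>) = heat_kernel (x - p) (\<sigma> + \<tau>)"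
proof -
  define f where "f i y = heat_kernel_1d \<sigma> (i x - y) * heat_kernel_1d \<tau> (y - i p)"
    for i :: "real \<times> real \<Rightarrow> real" and y
  have product: "heat_kernel (x - y) \<sigma> * heat_kernel (y - p) \<tau> = f fst (fst y) * f snd (snd y)" for y
    using assms by (simp add: heat_kernel_eq_1d_product f_def)
  have "(LINT y|lborel. heat_kernel (x - y) \<sigma> * heat_kernel (y - p) \<tau>)
      = enn2real (\<integral>\<^sup>+y. ennreal (heat_kernel (x - y) \<sigma> * heat_kernel (y - p) \<tau>) \<partial>lborel)"
  proof (rule integral_eq_nn_integral)
    show "(\<lambda>y. heat_kernel (x - y) \<sigma> * heat_kernel (y - p) \<tau>) \<in> borel_measurable lborel"
      unfolding measurable_lborel2 heat_kernel_def
      using assms by (intro borel_measurable_continuous_onI continuous_intros) auto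
  qed (simp add: product f_def)
  also have "\<dots> = enn2real ((\<integral>\<^sup>+y. ennreal (f fst y) \<partial>lborel) * (\<integral>\<^sup>+y. ennreal (f snd y) \<partial>lborel))"
    unfolding product by (subst nn_integral_lborel_pair_product) (auto simp: f_def[abs_def])
  also have "\<dots> = heat_kernel_1d (\<sigma> + \<tau>) (fst x - fst p) * heat_kernel_1d (\<sigma> + \<tau>) (snd x - snd p)"
    using assms by (simp add: f_def heat_kernel_1d_convolution enn2real_mult)
  also have "\<dots> = heat_kernel (x - p) (\<sigma> + \<tau>)"
    using assms by (simp add: heat_kernel_eq_1d_product)
  finally show ?thesis .
qed

lemma duhamel_c_eq_integral:
  assumes "0 < \<epsilon>" "0 < t" and X: "continuous_on {0..t} X"
  shows "duhamel_c a \<epsilon> X x t = integral {0..t} (\<lambda>s. a * heat_kernel (x - X s) (\<epsilon> + t - s))"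
proof -
  define K where "K s = a * heat_kernel (x - X s) (\<epsilon> + t - s)" for s
  have "continuous_on {0..t} K"
    unfolding K_def heat_kernel_def using assms by (intro continuous_intros X) auto
  then have K: "set_integrable lborel {0..t} K"
    by (rule borel_integrable_atLeastAtMost')
  \<comment> \<open>The semigroup property evaluates the inner integral for \<open>s < t\<close>; at \<open>s = t\<close> the kernel
      \<open>heat_kernel _ 0\<close> vanishes because division by zero yields zero.\<close>
  have inner: "indicator {0..t} s *\<^sub>R (LINT y|lborel. heat_kernel (x - y) (t - s) * (a * eta \<epsilon> (y - X s)))
      = indicator {0..<t} s *\<^sub>R K s" for s
  proof (cases "s \<in> {0..<t}")
    case True
    then show ?thesis
      using heat_kernel_convolution[of "t - s" \<epsilon> x "X s"] assms
      by (simp add: K_def eta_eq_heat_kernel mult.left_commute[of _ a] algebra_simps)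
  next
    case False
    then show ?thesis by (cases "s = t") (auto simp: heat_kernel_def indicator_def)
  qed
  have "duhamel_c a \<epsilon> X x t = (LINT s:{0..<t}|lborel. K s)"
    unfolding duhamel_c_def set_lebesgue_integral_def inner ..
  also have "\<dots> = (LINT s:{0..t}|lborel. K s)"
  proof (rule set_integral_cong_set)
    show "set_borel_measurable lborel {0..t} K"
      using K by (simp add: set_borel_measurable_def set_integrable_def borel_measurable_integrable)
    have "set_integrable lborel {0..<t} K"
      by (rule set_integrable_subset[OF K]) auto
    then show "set_borel_measurable lborel {0..<t} K"
      by (simp add: set_borel_measurable_def set_integrable_def borel_measurable_integrable)
    show "AE s in lborel. (s \<in> {0..t}) = (s \<in> {0..<t})"
      using AE_lborel_singleton[of t] by eventually_elim auto
  qed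
  also have "\<dots> = integral {0..t} K"
    by (rule set_borel_integral_eq_integral(2)[OF K])
  finally show ?thesis unfolding K_def .
qed

lemma heat_kernel_nonneg: "0 \<le> \<tau> \<Longrightarrow> 0 \<le> heat_kernel w \<tau>"
  by (simp add: heat_kernel_def)

lemma heat_kernel_le: "0 < \<tau> \<Longrightarrow> heat_kernel w \<tau> \<le> 1 / (4 * pi * \<tau>)"
  unfolding heat_kernel_def by (intro divide_right_mono) auto

lemma heat_kernel_ge:
  assumes "0 < \<tau>" and "(norm w)\<^sup>2 \<le> R\<^sup>2 * \<tau>"
  shows "exp (- (R\<^sup>2) / 4) / (4 * pi * \<tau>) \<le> heat_kernel w \<tau>"
proof -
  have "(norm w)\<^sup>2 / (4 * \<tau>) \<le> R\<^sup>2 / 4"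
    using assms by (simp add: field_simps)
  then show ?thesis
    unfolding heat_kernel_def using assms(1) by (intro divide_right_mono) auto
qed

text \<open>A one-sided substitute for \<open>\<partial>\<^sub>1 G(z, \<tau>) = - z\<^sub>1 G(z, \<tau>) / (2 \<tau>)\<close>: it spares us
  differentiating under the Duhamel integral.\<close>

lemma heat_kernel_shift_diff_quotient_le:
  assumes "0 < \<tau>" "0 < h"
  shows "(heat_kernel (z + (h, 0)) \<tau> - heat_kernel z \<tau>) / h
    \<le> - heat_kernel (z + (h, 0)) \<tau> * (2 * fst z + h) / (4 * \<tau>)"
proof -
  define P where "P = (norm z)\<^sup>2 / (4 * \<tau>)"
  define A where "A = h * (2 * fst z + h) / (4 * \<tau>)"
  have "(norm (z + (h, 0)))\<^sup>2 = (fst z + h)\<^sup>2 + (snd z)\<^sup>2" "(norm z)\<^sup>2 = (fst z)\<^sup>2 + (snd z)\<^sup>2"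
    by (cases z; simp add: norm_Pair)+
  then have "(norm (z + (h, 0)))\<^sup>2 = (norm z)\<^sup>2 + h * (2 * fst z + h)"
    by (simp add: power2_eq_square algebra_simps)
  then have shifted: "heat_kernel (z + (h, 0)) \<tau> = exp (- (P + A)) / (4 * pi * \<tau>)"
    unfolding heat_kernel_def P_def A_def using assms by (simp add: field_simps)
  have unshifted: "heat_kernel z \<tau> = exp (- P) / (4 * pi * \<tau>)"
    unfolding heat_kernel_def P_def by simp
  have "exp (- (P + A)) * (1 + A) \<le> exp (- (P + A)) * exp A"
    by (intro mult_left_mono exp_ge_add_one_self) simp
  also have "\<dots> = exp (- P)"
    by (simp flip: exp_add)
  finally have "exp (- (P + A)) - exp (- P) \<le> - exp (- (P + A)) * A"
    by (simp add: algebra_simps)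
  then have "(exp (- (P + A)) - exp (- P)) / (4 * pi * \<tau>) \<le> - exp (- (P + A)) * A / (4 * pi * \<tau>)"
    using assms(1) by (intro divide_right_mono) auto
  then have "heat_kernel (z + (h, 0)) \<tau> - heat_kernel z \<tau> \<le> - heat_kernel (z + (h, 0)) \<tau> * A"
    unfolding shifted unshifted by (simp add: diff_divide_distrib)
  moreover have "- heat_kernel (z + (h, 0)) \<tau> * A = - heat_kernel (z + (h, 0)) \<tau> * (2 * fst z + h) / (4 * \<tau>) * h"
    by (simp add: A_def)
  ultimately show ?thesis
    using assms(2) by (simp only: pos_divide_le_eq)
qed

lemma heat_kernel_shift_diff_quotient_nonpos:
  assumes "0 < \<tau>" "0 < h" "0 \<le> fst z"
  shows "(heat_kernel (z + (h, 0)) \<tau> - heat_kernel z \<tau>) / h \<le> 0"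
proof -
  have "0 \<le> heat_kernel (z + (h, 0)) \<tau> * (2 * fst z + h) / (4 * \<tau>)"
    using assms heat_kernel_nonneg[of \<tau>] by simp
  then show ?thesis
    using heat_kernel_shift_diff_quotient_le[OF assms(1,2), of z] by linarith
qed

lemma heat_kernel_shift_diff_quotient_le_far:
  assumes "0 < \<tau>" "0 < h" "h \<le> 1" "\<bar>fst z\<bar> \<le> N"
  shows "(heat_kernel (z + (h, 0)) \<tau> - heat_kernel z \<tau>) / h \<le> (2 * N + 1) / (16 * pi * \<tau>\<^sup>2)"
proof -
  define H where "H = heat_kernel (z + (h, 0)) \<tau>"
  have "- (2 * fst z + h) \<le> 2 * N + 1"
    using assms by linarith
  then have "H * - (2 * fst z + h) \<le> H * (2 * N + 1)"
    using heat_kernel_nonneg[of \<tau> "z + (h, 0)"] unfolding H_def by (rule mult_left_mono) (use assms in auto)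
  then have "- H * (2 * fst z + h) \<le> H * (2 * N + 1)"
    by (simp add: algebra_simps)
  also have "\<dots> \<le> 1 / (4 * pi * \<tau>) * (2 * N + 1)"
    using assms heat_kernel_le abs_ge_zero[of "fst z"] unfolding H_def
    by (intro mult_right_mono) fastforce+
  finally have "- H * (2 * fst z + h) / (4 * \<tau>) \<le> 1 / (4 * pi * \<tau>) * (2 * N + 1) / (4 * \<tau>)"
    using assms(1) by (intro divide_right_mono) auto
  also have "\<dots> = (2 * N + 1) / (16 * pi * \<tau>\<^sup>2)"
    by (simp add: power2_eq_square)
  finally show ?thesis
    using heat_kernel_shift_diff_quotient_le[OF assms(1,2), of z] unfolding H_def by linarith
qed

lemma heat_kernel_shift_diff_quotient_le_near:
  assumes "0 < h" "0 < r" "r \<le> \<tau>" "\<tau> \<le> 2 * r" "0 \<le> v"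
    and "v * r \<le> 2 * fst z + h" and "(norm (z + (h, 0)))\<^sup>2 \<le> R\<^sup>2 * \<tau>"
  shows "(heat_kernel (z + (h, 0)) \<tau> - heat_kernel z \<tau>) / h \<le> - v * exp (- (R\<^sup>2) / 4) / (64 * pi * r)"
proof -
  define E where "E = exp (- (R\<^sup>2) / 4)"
  have \<tau>: "0 < \<tau>" using assms by linarith
  have "E / (4 * pi * \<tau>) * (v * r) \<le> heat_kernel (z + (h, 0)) \<tau> * (2 * fst z + h)"
    using assms heat_kernel_ge[OF \<tau> assms(7)] heat_kernel_nonneg[of \<tau> "z + (h, 0)"] \<tau>
    by (intro mult_mono) (auto simp: E_def)
  moreover have "v * E / (64 * pi * r) \<le> E / (4 * pi * \<tau>) * (v * r) / (4 * \<tau>)"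
  proof -
    have "\<tau> * \<tau> \<le> 4 * (r * r)"
      using assms \<tau> mult_mono[of \<tau> "2 * r" \<tau> "2 * r"] by simp
    then have "v * E * r / (16 * pi * (4 * (r * r))) \<le> v * E * r / (16 * pi * (\<tau> * \<tau>))"
      using assms \<tau> by (intro divide_left_mono mult_left_mono) (auto simp: E_def)
    then show ?thesis
      using assms by (simp add: field_simps)
  qed
  moreover have "E / (4 * pi * \<tau>) * (v * r) / (4 * \<tau>)
      \<le> heat_kernel (z + (h, 0)) \<tau> * (2 * fst z + h) / (4 * \<tau>)"
    using calculation(1) \<tau> by (intro divide_right_mono) auto
  ultimately have "- heat_kernel (z + (h, 0)) \<tau> * (2 * fst z + h) / (4 * \<tau>) \<le> - v * E / (64 * pi * r)"
    by simp
  then show ?thesis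
    using heat_kernel_shift_diff_quotient_le[OF \<tau> assms(1), of z] unfolding E_def by linarith
qed

lemma heat_kernel_shift_diff_quotient_le_recent:
  assumes "0 < h" "h \<le> e" "e \<le> r" "r \<le> 1" "0 \<le> v"
    and "r * (v / 2) \<le> fst z" and "norm z \<le> r * L"
  shows "(heat_kernel (z + (h, 0)) (e + r) - heat_kernel z (e + r)) / h
    \<le> - v * exp (- ((L + 1)\<^sup>2) / 4) / (64 * pi * r)"
proof (rule heat_kernel_shift_diff_quotient_le_near)
  have "norm (z + (h, 0)) \<le> r * L + h"
    using norm_triangle_ineq[of z "(h, 0)"] assms by (simp add: norm_Pair)
  also have "\<dots> \<le> (L + 1) * r"
    using assms by (simp add: algebra_simps)
  finally have "(norm (z + (h, 0)))\<^sup>2 \<le> (L + 1)\<^sup>2 * r\<^sup>2"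
    by (simp add: power_mono flip: power_mult_distrib)
  also have "\<dots> \<le> (L + 1)\<^sup>2 * (e + r)"
  proof -
    have "r * r \<le> r * 1"
      using assms by (intro mult_left_mono) auto
    then have "r\<^sup>2 \<le> e + r"
      unfolding power2_eq_square using assms by linarith
    then show ?thesis
      by (intro mult_left_mono) auto
  qed
  finally show "(norm (z + (h, 0)))\<^sup>2 \<le> (L + 1)\<^sup>2 * (e + r)" .
qed (use assms in \<open>auto simp: mult.commute\<close>)

lemma has_integral_inverse_diff:
  fixes t e :: real
  assumes "0 < e" "e \<le> 1"
  shows "((\<lambda>s. 1 / (t - s)) has_integral ln (1 / e)) {t - 1..t - e}"
proof -
  have "((\<lambda>s. 1 / (t - s)) has_integral (- ln (t - (t - e)) - - ln (t - (t - 1)))) {t - 1..t - e}"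
  proof (rule fundamental_theorem_of_calculus[where f = "\<lambda>s. - ln (t - s)"])
    show "t - 1 \<le> t - e" using assms by simp
    fix s assume "s \<in> {t - 1..t - e}"
    then have "0 < t - s" using assms by auto
    then show "((\<lambda>s. - ln (t - s)) has_vector_derivative 1 / (t - s)) (at s within {t - 1..t - e})"
      by (auto intro!: derivative_eq_intros simp flip: has_real_derivative_iff_has_vector_derivative)
  qed
  then show ?thesis using assms by (simp add: ln_div)
qed

lemma integral_le_by_regimes:
  fixes q :: "real \<Rightarrow> real"
  assumes q: "continuous_on {0..t} q" and T: "0 \<le> T" "T \<le> t - 1" and e: "0 < e" "e \<le> 1"
    and early: "\<And>s. 0 \<le> s \<Longrightarrow> s \<le> T \<Longrightarrow> q s \<le> A"
    and late: "\<And>s. T \<le> s \<Longrightarrow> s \<le> t \<Longrightarrow> q s \<le> 0"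
    and recent: "\<And>s. t - 1 \<le> s \<Longrightarrow> s \<le> t - e \<Longrightarrow> q s \<le> c / (t - s)"
  shows "integral {0..t} q \<le> T * A + c * ln (1 / e)"
proof -
  have integrable: "q integrable_on {l..r}" if "0 \<le> l" "r \<le> t" for l r
    using that by (intro integrable_continuous_real continuous_on_subset[OF q]) auto
  have log: "((\<lambda>s. c / (t - s)) has_integral c * ln (1 / e)) {t - 1..t - e}"
    using has_integral_mult_right[OF has_integral_inverse_diff[OF e]] by simp
  have "integral {0..T} q \<le> integral {0..T} (\<lambda>_. A)"
    using early T by (intro integral_le integrable) auto
  then have I1: "integral {0..T} q \<le> T * A"
    using T by simp
  have "integral {T..t - 1} q \<le> integral {T..t - 1} (\<lambda>_. 0)"
    using late T by (intro integral_le integrable) auto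
  then have I2: "integral {T..t - 1} q \<le> 0"
    by simp
  have "integral {t - 1..t - e} q \<le> integral {t - 1..t - e} (\<lambda>s. c / (t - s))"
    using recent T e by (intro integral_le integrable has_integral_integrable[OF log]) auto
  then have I3: "integral {t - 1..t - e} q \<le> c * ln (1 / e)"
    using integral_unique[OF log] by simp
  have "integral {t - e..t} q \<le> integral {t - e..t} (\<lambda>_. 0)"
    using late T e by (intro integral_le integrable) auto
  then have I4: "integral {t - e..t} q \<le> 0"
    by simp
  have "integral {0..t} q = integral {0..T} q + integral {T..t} q"
    using T integrable[of 0 t] by (simp add: Henstock_Kurzweil_Integration.integral_combine)
  also have "integral {T..t} q = integral {T..t - 1} q + integral {t - 1..t} q"
    using T integrable[of T t] by (simp add: Henstock_Kurzweil_Integration.integral_combine)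
  also have "integral {t - 1..t} q = integral {t - 1..t - e} q + integral {t - e..t} q"
    using T e integrable[of "t - 1" t] by (simp add: Henstock_Kurzweil_Integration.integral_combine)
  finally show ?thesis
    using I1 I2 I3 I4 by linarith
qed

lemma abs_fst_le_norm: "\<bar>fst (p :: real \<times> 'a::real_normed_vector)\<bar> \<le> norm p"
  using norm_fst_le[of "fst p" "snd p"] by simp

lemma displacement_deviation_le:
  fixes X X' :: "real \<Rightarrow> 'a::real_normed_vector"
  assumes der: "\<And>r. r \<in> {s..t} \<Longrightarrow> (X has_vector_derivative X' r) (at r)"
    and close: "\<And>r. r \<in> {s..t} \<Longrightarrow> norm (X' r - w) \<le> d" and "s \<le> t"
  shows "norm (X t - X s - (t - s) *\<^sub>R w) \<le> (t - s) * (3 * d)"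
proof -
  have "norm (X t - X s - (t - s) *\<^sub>R X' s) \<le> norm (t - s) * (2 * d)"
  proof (rule vector_differentiable_bound_linearization[where S = "{s..t}"])
    show "(X has_vector_derivative X' r) (at r within {s..t})" if "r \<in> {s..t}" for r
      using der[OF that] by (rule has_vector_derivative_at_within)
    show "norm (X' r - X' s) \<le> 2 * d" if "r \<in> {s..t}" for r
      using norm_triangle_ineq4[of "X' r - w" "X' s - w"] close[OF that] close[of s] \<open>s \<le> t\<close> by auto
  qed (use \<open>s \<le> t\<close> in \<open>auto simp: closed_segment_eq_real_ivl\<close>)
  moreover have "norm ((t - s) *\<^sub>R (X' s - w)) \<le> (t - s) * d"
    using close[of s] \<open>s \<le> t\<close> by (simp add: mult_left_mono)
  ultimately show ?thesis
    using norm_triangle_ineq[of "X t - X s - (t - s) *\<^sub>R X' s" "(t - s) *\<^sub>R (X' s - w)"] \<open>s \<le> t\<close>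
    by (simp add: algebra_simps)
qed

lemma displacement_asymptotically_linear:
  fixes X :: "real \<Rightarrow> real \<times> real"
  assumes der: "\<And>t. 0 < t \<Longrightarrow> (X has_vector_derivative vector_derivative X (at t)) (at t)"
    and lim: "((\<lambda>t. vector_derivative X (at t)) \<longlongrightarrow> (v, 0)) at_top" and v: "0 < v"
  obtains T where "0 < T"
    and "\<And>s t. T \<le> s \<Longrightarrow> s \<le> t \<Longrightarrow> (t - s) * (v / 2) \<le> fst (X t - X s)"
    and "\<And>s t. T \<le> s \<Longrightarrow> s \<le> t \<Longrightarrow> norm (X t - X s) \<le> (t - s) * (v + 1)"
proof -
  define d where "d = min (1 / 3) (v / 6)"
  have d: "0 < d" "3 * d \<le> 1" "3 * d \<le> v / 2"
    using v by (auto simp: d_def)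
  obtain T0 where T0: "\<And>t. T0 \<le> t \<Longrightarrow> dist (vector_derivative X (at t)) (v, 0) < d"
    using tendstoD[OF lim d(1)] unfolding eventually_at_top_linorder by blast
  define T where "T = max T0 1"
  have deviation: "norm (X t - X s - (t - s) *\<^sub>R (v, 0)) \<le> (t - s) * (3 * d)"
    if "T \<le> s" "s \<le> t" for s t
    using that der T0
    by (intro displacement_deviation_le[where X' = "\<lambda>r. vector_derivative X (at r)"])
      (auto simp: T_def dist_norm less_imp_le)
  show ?thesis
  proof (rule that[of T])
    show "0 < T" by (simp add: T_def)
  next
    fix s t assume st: "T \<le> s" "s \<le> t"
    have "\<bar>fst (X t - X s) - (t - s) * v\<bar> \<le> (t - s) * (3 * d)"
      using deviation[OF st] abs_fst_le_norm[of "X t - X s - (t - s) *\<^sub>R (v, 0)"] by simp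
    then have "(t - s) * (v - 3 * d) \<le> fst (X t - X s)"
      by (simp add: right_diff_distrib abs_le_iff)
    moreover have "(t - s) * (v / 2) \<le> (t - s) * (v - 3 * d)"
      using d st by (intro mult_left_mono) auto
    ultimately show "(t - s) * (v / 2) \<le> fst (X t - X s)"
      by linarith
  next
    fix s t assume st: "T \<le> s" "s \<le> t"
    have "norm (X t - X s) \<le> norm ((t - s) *\<^sub>R (v, 0::real)) + (t - s) * (3 * d)"
      using deviation[OF st] norm_triangle_ineq2[of "X t - X s" "(t - s) *\<^sub>R (v, 0)"] by simp
    also have "\<dots> \<le> (t - s) * v + (t - s)"
      using d st v mult_left_mono[of "3 * d" 1 "t - s"] by (simp add: norm_Pair)
    also have "\<dots> = (t - s) * (v + 1)"
      by (simp add: distrib_left)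
    finally show "norm (X t - X s) \<le> (t - s) * (v + 1)" .
  qed
qed

lemma fst_gradient_le_of_diff_quotients_le:
  fixes f :: "real \<times> real \<Rightarrow> real"
  assumes f: "(f has_derivative (\<lambda>y. g \<bullet> y)) (at x)" and "0 < e"
    and bound: "\<And>h. 0 < h \<Longrightarrow> h < e \<Longrightarrow> (f (x + (h, 0)) - f x) / h \<le> M"
  shows "fst g \<le> M"
proof -
  have "((\<lambda>h::real. x + (h, 0)) has_derivative (\<lambda>h. (h, 0))) (at 0)"
    by (auto intro!: derivative_eq_intros)
  moreover have "(f has_derivative (\<lambda>y. g \<bullet> y)) (at (x + (0, 0)))"
    using f by (simp add: zero_prod_def[symmetric])
  ultimately have "((\<lambda>h. f (x + (h, 0))) has_derivative (\<lambda>h. g \<bullet> (h, 0))) (at 0)"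
    by (rule has_derivative_compose)
  moreover have "(\<lambda>h. g \<bullet> (h, 0)) = (*) (fst g)"
    by (cases g) auto
  ultimately have "((\<lambda>h. f (x + (h, 0))) has_field_derivative fst g) (at 0)"
    by (simp add: has_field_derivative_def)
  then have "((\<lambda>h. (f (x + (h, 0)) - f x) / h) \<longlongrightarrow> fst g) (at_right 0)"
    by (auto simp: has_field_derivative_iff zero_prod_def[symmetric] intro: tendsto_mono[OF at_le])
  moreover have "\<forall>\<^sub>F h in at_right 0. (f (x + (h, 0)) - f x) / h \<le> M"
    unfolding eventually_at_right_field using \<open>0 < e\<close> bound by blast
  ultimately show ?thesis
    by (rule tendsto_upperbound) simp
qed

lemma duhamel_c_shift_diff_quotient_eq_integral:
  assumes "0 < e" "0 < t" and X: "continuous_on {0..t} X"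
  shows "(duhamel_c a e X (x + (h, 0)) t - duhamel_c a e X x t) / h
    = integral {0..t} (\<lambda>s. a * ((heat_kernel (x - X s + (h, 0)) (e + t - s)
                                  - heat_kernel (x - X s) (e + t - s)) / h))"
proof -
  define K where "K y s = a * heat_kernel (y - X s) (e + t - s)" for y s
  have K: "K y integrable_on {0..t}" for y
    unfolding K_def heat_kernel_def using assms by (intro integrable_continuous_real continuous_intros X) auto
  have "(duhamel_c a e X (x + (h, 0)) t - duhamel_c a e X x t) / h
      = (integral {0..t} (K (x + (h, 0))) - integral {0..t} (K x)) / h"
    using assms by (simp add: duhamel_c_eq_integral K_def[abs_def])
  also have "\<dots> = integral {0..t} (\<lambda>s. (K (x + (h, 0)) s - K x s) / h)"
    by (simp add: integral_diff[OF K K])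
  finally show ?thesis
    by (simp add: K_def right_diff_distrib diff_add_eq)
qed

lemma duhamel_c_shift_diff_quotient_le:
  fixes X :: "real \<Rightarrow> real \<times> real"
  assumes a: "0 < a" and e: "0 < e" "e < 1" and h: "0 < h" "h \<le> e" and v: "0 \<le> v"
    and X: "continuous_on {0..t} X" and T: "0 \<le> T" "T + 1 \<le> t"
    and early: "\<And>s. 0 \<le> s \<Longrightarrow> s \<le> T \<Longrightarrow> \<bar>fst (X t - X s)\<bar> \<le> N"
    and late_fst: "\<And>s. T \<le> s \<Longrightarrow> s \<le> t \<Longrightarrow> (t - s) * (v / 2) \<le> fst (X t - X s)"
    and late_norm: "\<And>s. T \<le> s \<Longrightarrow> s \<le> t \<Longrightarrow> norm (X t - X s) \<le> (t - s) * L"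
  shows "(duhamel_c a e X (X t + (h, 0)) t - duhamel_c a e X (X t) t) / h
    \<le> a * T * (2 * N + 1) / (16 * pi * (t - T)\<^sup>2)
       - a * v * exp (- ((L + 1)\<^sup>2) / 4) / (64 * pi) * ln (1 / e)"
proof -
  define E where "E = exp (- ((L + 1)\<^sup>2) / 4)"
  define Q where "Q s = (heat_kernel (X t - X s + (h, 0)) (e + t - s) - heat_kernel (X t - X s) (e + t - s)) / h"
    for s
  have "(duhamel_c a e X (X t + (h, 0)) t - duhamel_c a e X (X t) t) / h = integral {0..t} (\<lambda>s. a * Q s)"
    unfolding Q_def using e T by (intro duhamel_c_shift_diff_quotient_eq_integral X) auto
  also have "\<dots> \<le> T * (a * (2 * N + 1) / (16 * pi * (t - T)\<^sup>2)) + (- a * v * E / (64 * pi)) * ln (1 / e)"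
  proof (rule integral_le_by_regimes)
    show "continuous_on {0..t} (\<lambda>s. a * Q s)"
      unfolding Q_def heat_kernel_def using e h by (intro continuous_intros X) auto
    show "a * Q s \<le> a * (2 * N + 1) / (16 * pi * (t - T)\<^sup>2)" if "0 \<le> s" "s \<le> T" for s
    proof -
      have "Q s \<le> (2 * N + 1) / (16 * pi * (e + t - s)\<^sup>2)"
        unfolding Q_def using that T e h early[OF that]
        by (intro heat_kernel_shift_diff_quotient_le_far) auto
      also have "\<dots> \<le> (2 * N + 1) / (16 * pi * (t - T)\<^sup>2)"
        using that e T early[OF that] by (intro divide_left_mono mult_left_mono power_mono) auto
      finally have "a * Q s \<le> a * ((2 * N + 1) / (16 * pi * (t - T)\<^sup>2))"
        using a by (intro mult_left_mono) auto
      then show ?thesis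
        by simp
    qed
    show "a * Q s \<le> 0" if "T \<le> s" "s \<le> t" for s
    proof -
      have "0 \<le> (t - s) * (v / 2)"
        using that v by simp
      then have "Q s \<le> 0"
        unfolding Q_def using that e h late_fst[OF that]
        by (intro heat_kernel_shift_diff_quotient_nonpos) auto
      then show ?thesis
        using a by (simp add: mult_nonneg_nonpos)
    qed
    show "a * Q s \<le> - a * v * E / (64 * pi) / (t - s)" if "t - 1 \<le> s" "s \<le> t - e" for s
    proof -
      have s: "T \<le> s" "s \<le> t"
        using that T e by auto
      have "Q s \<le> - v * E / (64 * pi * (t - s))"
        using heat_kernel_shift_diff_quotient_le_recent[of h e "t - s" v "X t - X s" L]
          that h v late_fst[OF s] late_norm[OF s]
        by (simp add: Q_def E_def add_diff_eq mult.commute)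
      then have "a * Q s \<le> a * (- v * E / (64 * pi * (t - s)))"
        using a by (intro mult_left_mono) auto
      then show ?thesis
        by simp
    qed
  qed (use T e in auto)
  also have "\<dots> = a * T * (2 * N + 1) / (16 * pi * (t - T)\<^sup>2) - a * v * E / (64 * pi) * ln (1 / e)"
    by simp
  finally show ?thesis
    unfolding E_def .
qed

lemma duhamel_c_gradient_fst_le:
  fixes X :: "real \<Rightarrow> real \<times> real"
  assumes grad: "((\<lambda>x. duhamel_c a e X x t) has_derivative (\<lambda>y. g \<bullet> y)) (at (X t))"
    and a: "0 < a" and e: "0 < e" "e < 1" and v: "0 \<le> v"
    and X: "continuous_on {0..t} X" and T: "0 \<le> T" "T + 1 \<le> t"
    and early: "\<And>s. 0 \<le> s \<Longrightarrow> s \<le> T \<Longrightarrow> \<bar>fst (X t - X s)\<bar> \<le> N"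
    and late_fst: "\<And>s. T \<le> s \<Longrightarrow> s \<le> t \<Longrightarrow> (t - s) * (v / 2) \<le> fst (X t - X s)"
    and late_norm: "\<And>s. T \<le> s \<Longrightarrow> s \<le> t \<Longrightarrow> norm (X t - X s) \<le> (t - s) * L"
  shows "fst g \<le> a * T * (2 * N + 1) / (16 * pi * (t - T)\<^sup>2)
       - a * v * exp (- ((L + 1)\<^sup>2) / 4) / (64 * pi) * ln (1 / e)"
  using assms by (intro fst_gradient_le_of_diff_quotients_le[OF grad e(1)] duhamel_c_shift_diff_quotient_le) auto

lemma early_displacement_bound:
  fixes X :: "real \<Rightarrow> real \<times> real"
  assumes X: "continuous_on {0..} X"
    and late_norm: "\<And>s t. T \<le> s \<Longrightarrow> s \<le> t \<Longrightarrow> norm (X t - X s) \<le> (t - s) * L"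
  obtains B where "\<And>s t. T \<le> t \<Longrightarrow> 0 \<le> s \<Longrightarrow> s \<le> T \<Longrightarrow> \<bar>fst (X t - X s)\<bar> \<le> (t - T) * L + 2 * B"
proof -
  have "bounded (X ` {0..T})"
    by (intro compact_imp_bounded compact_continuous_image continuous_on_subset[OF X]) auto
  then obtain B where B: "\<And>s. s \<in> {0..T} \<Longrightarrow> norm (X s) \<le> B"
    unfolding bounded_iff by blast
  have "\<bar>fst (X t - X s)\<bar> \<le> (t - T) * L + 2 * B" if "T \<le> t" "0 \<le> s" "s \<le> T" for s t
  proof -
    have "\<bar>fst (X t - X s)\<bar> \<le> norm (X t - X T) + norm (X T) + norm (X s)"
      using abs_fst_le_norm[of "X t - X s"] norm_triangle_ineq[of "X t - X T" "X T - X s"]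
        norm_triangle_ineq4[of "X T" "X s"] by simp
    then show ?thesis
      using late_norm[of T t] B[of T] B[of s] that by simp
  qed
  then show ?thesis
    by (rule that)
qed

lemma terminal_speed_bound:
  fixes X :: "real \<Rightarrow> real \<times> real"
  assumes a: "0 < a" and e: "0 < e" "e < 1" and v: "0 < v" "v \<le> M"
    and X: "continuous_on {0..} X"
    and ode: "\<And>t. 0 < t \<Longrightarrow>
       \<exists>g. ((\<lambda>x. duhamel_c a e X x t) has_derivative (\<lambda>h. g \<bullet> h)) (at (X t))
         \<and> (X has_vector_derivative (g + (u, 0))) (at t)"
    and lim: "((\<lambda>t. vector_derivative X (at t)) \<longlongrightarrow> (v, 0)) at_top"
  shows "v * (1 + a * exp (- ((M + 2)\<^sup>2) / 4) / (64 * pi) * ln (1 / e)) \<le> u"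
proof -
  have "(X has_vector_derivative vector_derivative X (at t)) (at t)" if t: "0 < t" for t
  proof -
    obtain g where "(X has_vector_derivative (g + (u, 0))) (at t)"
      using ode[OF t] by blast
    then show ?thesis
      by (simp add: vector_derivative_at)
  qed
  then obtain T where T: "0 < T"
    and late_fst: "\<And>s t. T \<le> s \<Longrightarrow> s \<le> t \<Longrightarrow> (t - s) * (v / 2) \<le> fst (X t - X s)"
    and late_norm: "\<And>s t. T \<le> s \<Longrightarrow> s \<le> t \<Longrightarrow> norm (X t - X s) \<le> (t - s) * (v + 1)"
    using displacement_asymptotically_linear[OF _ lim v(1)] by blast
  have late_norm': "norm (X t - X s) \<le> (t - s) * (M + 1)" if "T \<le> s" "s \<le> t" for s t
    using late_norm[OF that] mult_left_mono[of "v + 1" "M + 1" "t - s"] that v by linarith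
  obtain B where early: "\<And>s t. T \<le> t \<Longrightarrow> 0 \<le> s \<Longrightarrow> s \<le> T \<Longrightarrow> \<bar>fst (X t - X s)\<bar> \<le> (t - T) * (M + 1) + 2 * B"
    using early_displacement_bound[OF X late_norm'] by blast
  define K where "K = a * v * exp (- ((M + 2)\<^sup>2) / 4) / (64 * pi) * ln (1 / e)"
  \<comment> \<open>\<open>R t\<close> bounds the contribution of the source laid down before time \<open>T\<close>.\<close>
  define R where "R t = a * T * (2 * ((t - T) * (M + 1) + 2 * B) + 1) / (16 * pi * (t - T)\<^sup>2)" for t
  have speed: "fst (vector_derivative X (at t)) \<le> u + R t - K" if t: "T + 1 \<le> t" for t
  proof -
    obtain g where grad: "((\<lambda>x. duhamel_c a e X x t) has_derivative (\<lambda>h. g \<bullet> h)) (at (X t))"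
      and velocity: "(X has_vector_derivative (g + (u, 0))) (at t)"
      using ode[of t] T t by auto
    have "fst g \<le> R t - a * v * exp (- ((M + 1 + 1)\<^sup>2) / 4) / (64 * pi) * ln (1 / e)"
      unfolding R_def using a e v T t early[of t] late_fst late_norm'
      by (intro duhamel_c_gradient_fst_le[OF grad] continuous_on_subset[OF X]) auto
    then show ?thesis
      using vector_derivative_at[OF velocity] by (simp add: K_def add.assoc)
  qed
  have "(R \<longlongrightarrow> 0) at_top"
    unfolding R_def by real_asymp
  then have "((\<lambda>t. u + R t - K) \<longlongrightarrow> u + 0 - K) at_top"
    by (intro tendsto_intros)
  moreover have "((\<lambda>t. fst (vector_derivative X (at t))) \<longlongrightarrow> v) at_top"
    using tendsto_fst[OF lim] by simp
  moreover have "\<forall>\<^sub>F t in at_top. fst (vector_derivative X (at t)) \<le> u + R t - K"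
    unfolding eventually_at_top_linorder using speed by blast
  ultimately have "v \<le> u + 0 - K"
    by (rule tendsto_le[OF trivial_limit_at_top_linorder])
  then show ?thesis
    unfolding K_def by (simp add: algebra_simps)
qed

theorem proposition4p2:
  fixes a u x0 y0 :: real
    and X :: "real \<Rightarrow> real \<Rightarrow> real \<times> real"
    and v :: "real \<Rightarrow> real"
  assumes a_pos: "a > 0" and u_pos: "u > 0"
    and init: "\<And>\<epsilon>. \<epsilon> \<in> {0<..<1} \<Longrightarrow> X \<epsilon> 0 = (x0, y0)"
    and cont: "\<And>\<epsilon>. \<epsilon> \<in> {0<..<1} \<Longrightarrow> continuous_on {0..} (X \<epsilon>)"
    and ode: "\<And>\<epsilon> t. \<epsilon> \<in> {0<..<1} \<Longrightarrow> t > 0 \<Longrightarrow>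
       \<exists>g. ((\<lambda>x. duhamel_c a \<epsilon> (X \<epsilon>) x t) has_derivative (\<lambda>h. g \<bullet> h)) (at (X \<epsilon> t))
         \<and> (X \<epsilon> has_vector_derivative (g + (u, 0))) (at t)"
    and mono: "\<And>\<epsilon>. \<epsilon> \<in> {0<..<1} \<Longrightarrow> \<exists>T>0. \<forall>s t. T \<le> s \<longrightarrow> s \<le> t \<longrightarrow>
       fst (vector_derivative (X \<epsilon>) (at t)) \<le> fst (vector_derivative (X \<epsilon>) (at s))"
    and v_pos: "\<And>\<epsilon>. \<epsilon> \<in> {0<..<1} \<Longrightarrow> v \<epsilon> > 0"
    and lim: "\<And>\<epsilon>. \<epsilon> \<in> {0<..<1} \<Longrightarrow>
       ((\<lambda>t. vector_derivative (X \<epsilon>) (at t)) \<longlongrightarrow> (v \<epsilon>, 0)) at_top"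
    and bdd: "\<exists>M. \<forall>\<epsilon>\<in>{0<..<1}. \<bar>v \<epsilon>\<bar> \<le> M"
  shows "(v \<longlongrightarrow> 0) (at_right 0)"
proof -
  obtain M where "\<forall>\<epsilon>\<in>{0<..<1}. \<bar>v \<epsilon>\<bar> \<le> M"
    using bdd by blast
  then have M: "\<And>\<epsilon>. \<epsilon> \<in> {0<..<1} \<Longrightarrow> v \<epsilon> \<le> M"
    by (meson abs_le_D1)
  define k where "k = a * exp (- ((M + 2)\<^sup>2) / 4) / (64 * pi)"
  have k: "0 < k"
    unfolding k_def using a_pos by simp
  have "\<forall>\<^sub>F \<epsilon> in at_right 0. \<epsilon> \<in> {0<..<1::real}"
    unfolding eventually_at_right_field by (intro exI[of _ 1]) auto
  then have "\<forall>\<^sub>F \<epsilon> in at_right 0. 0 \<le> v \<epsilon> \<and> v \<epsilon> \<le> u / (1 + k * ln (1 / \<epsilon>))"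
  proof eventually_elim
    case (elim \<epsilon>)
    have "v \<epsilon> * (1 + k * ln (1 / \<epsilon>)) \<le> u"
      unfolding k_def using elim v_pos M
      by (intro terminal_speed_bound[OF a_pos _ _ _ _ cont ode lim]) auto
    moreover have "0 < 1 + k * ln (1 / \<epsilon>)"
      using k elim by (simp add: add_pos_nonneg)
    ultimately show ?case
      using v_pos[OF elim] by (simp add: le_divide_eq)
  qed
  moreover have "((\<lambda>\<epsilon>. u / (1 + k * ln (1 / \<epsilon>))) \<longlongrightarrow> 0) (at_right 0)"
    using k by real_asymp
  ultimately show ?thesis
    by (intro tendsto_sandwich[of "\<lambda>_. 0" v]) (auto elim: eventually_mono)
qed

end
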